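(* Assume $q>2$. For every integer $d\ge1$, $$\deg_\theta\big(\operatorname{BG}_{q^d-2}\big)=(d-1)q^d-\frac{2q(q^{d-1}-1)}{q-1}.$$
   Context: $A=\mathbb{F}_q[\theta]$, $A^+(k)$ the monic polynomials of degree $k$; $\operatorname{BG}_n=\sum_{k\ge0}\sum_{a\in A^+(k)}a^{n}\in A$ (a finite sum since the inner sums vanish for large $k$). *)

theory Defs
  imports "HOL-Computational_Algebra.Polynomial" "HOL-Library.Groups_Big_Fun" "HOL-Library.Cardinality"
begin

definition monic_deg :: "nat \<Rightarrow> ('a::{field,finite}) poly set" where
  "monic_deg k = {a. lead_coeff a = 1 \<and> degree a = k}"

definition S_pow :: "nat \<Rightarrow> nat \<Rightarrow> ('a::{field,finite}) poly" where
  "S_pow k n = (\<Sum>a\<in>monic_deg k. a ^ n)"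

definition BG :: "nat \<Rightarrow> ('a::{field,finite}) poly" where
  "BG n = Sum_any (\<lambda>k. S_pow k n)"

end

theory Submission
  imports Defs
begin

text \<open>Write \<open>n = q^d - 2\<close> in base \<open>q\<close>: one digit \<open>q - 2\<close> at position \<open>0\<close> and digits
  \<open>q - 1\<close> at positions \<open>1, \<dots>, d - 1\<close>, recorded as a multiset \<open>J\<close> of positions \<open>r(t)\<close>. A monic
  polynomial of degree \<open>k + 1\<close> is \<open>x + \<theta> a\<close> with \<open>a\<close> monic of degree \<open>k\<close>, and by the Frobenius
  \<open>(x + \<theta> a)^n = \<Prod>t\<in>J. (x + (\<theta> a)^(q^r(t)))\<close>. Expanding the product and summing over
  \<open>x \<in> \<bbbF>\<^sub>q\<close>, where \<open>\<Sum>x. x^m\<close> is \<open>-1\<close> for positive multiples \<open>m\<close> of \<open>q - 1\<close> and \<open>0\<close>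
  otherwise, expresses \<open>S_(k+1)(n)\<close> through the \<open>\<theta>^n' S_k(n')\<close>, where \<open>n'\<close> is the value of \<open>J\<close>
  with \<open>q - 1\<close> digits removed. Comparing digit values shows that the top degree is reached
  exactly by removing the \<open>q - 2\<close> lowest digits together with one of the \<open>q - 1\<close> next ones; the
  remaining digits form a block of the same shape, so induction gives the degree of
  \<open>S_(d-1)(n)\<close>, with leading coefficient \<open>-(q - 1) = 1\<close>. The \<open>S_k(n)\<close> with \<open>k < d - 1\<close> have
  degree at most \<open>k n\<close>, which is smaller, and those with \<open>k \<ge> d\<close> vanish since \<open>|J| < k (q - 1)\<close>.\<close>

subsection \<open>Finite fields\<close>

lemma card_field_ge_2: "CARD('a::{field,finite}) \<ge> 2"
proof -
  have "card {0::'a, 1} \<le> CARD('a)" by (intro card_mono) auto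
  then show ?thesis by simp
qed

lemma of_nat_card_field: "of_nat CARD('a::{field,finite}) = (0::'a)"
proof -
  have "(\<Sum>x\<in>(UNIV::'a set). x + 1) = (\<Sum>x\<in>UNIV. x)"
    by (rule sum.reindex_bij_witness[of _ "\<lambda>x. x - 1" "\<lambda>x. x + 1"]) auto
  then show ?thesis by (simp add: sum.distrib)
qed

lemma power_card_field: "(x::'a::{field,finite}) ^ CARD('a) = x"
proof (cases "x = 0")
  case False
  have "x * (\<Prod>y\<in>UNIV-{0}. x * y) = x * x ^ (CARD('a) - 1) * \<Prod>(UNIV-{0})"
    by (simp add: prod.distrib mult_ac)
  also have "x * x ^ (CARD('a) - 1) = x ^ CARD('a)"
    using card_field_ge_2[where 'a='a] by (simp flip: power_Suc)
  also have "(\<Prod>y\<in>UNIV-{0}. x * y) = (\<Prod>y\<in>UNIV-{0}. y)"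
    by (rule prod.reindex_bij_witness[of _ "\<lambda>y. y / x" "\<lambda>y. x * y"]) (use False in auto)
  finally show ?thesis by simp
qed (use card_field_ge_2[where 'a='a] in auto)

lemma power_card_minus_one_field:
  assumes "(x::'a::{field,finite}) \<noteq> 0"
  shows "x ^ (CARD('a) - 1) = 1"
proof -
  have "x * x ^ (CARD('a) - 1) = x ^ CARD('a)"
    using card_field_ge_2[where 'a='a] by (simp flip: power_Suc)
  then have "x * x ^ (CARD('a) - 1) = x * 1" by (simp add: power_card_field)
  then show ?thesis using assms by simp
qed

lemma power_card_power_field: "(x::'a::{field,finite}) ^ (CARD('a) ^ j) = x"
  by (induction j) (simp_all add: power_mult power_card_field)

lemma exists_power_ne_one_field:
  assumes "0 < r" "r < CARD('a::{field,finite}) - 1"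
  obtains g :: "'a::{field,finite}" where "g \<noteq> 0" "g ^ r \<noteq> 1"
proof -
  let ?p = "monom (1::'a) r + [:-1:]"
  have "degree ?p = r"
    using assms by (subst degree_add_eq_left) (auto simp: degree_monom_eq)
  then have "card {x. poly ?p x = 0} \<le> r"
    using assms card_poly_roots_bound[of ?p] by force
  then have "\<not> UNIV - {0} \<subseteq> {x. poly ?p x = 0}"
    using assms card_mono[of "{x. poly ?p x = 0}" "UNIV - {0::'a}"]
    by (auto simp: card_Diff_singleton)
  then show ?thesis using that by (auto simp: poly_monom)
qed

definition field_power_sum :: "nat \<Rightarrow> 'a::{field,finite}" where
  "field_power_sum m = (\<Sum>x\<in>UNIV. x ^ m)"

lemma field_power_sum_eq:
  "field_power_sum m =
     (if 0 < m \<and> (CARD('a::{field,finite}) - 1) dvd m then - 1 else (0::'a))"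
proof (cases "m = 0")
  case True
  then show ?thesis by (simp add: field_power_sum_def of_nat_card_field)
next
  case False
  let ?Q = "CARD('a) - 1" and ?r = "m mod (CARD('a) - 1)"
  have "x ^ m = x ^ ?r" if "x \<noteq> 0" for x :: 'a
  proof -
    have "x ^ m = (x ^ ?Q) ^ (m div ?Q) * x ^ ?r"
      by (simp flip: power_mult power_add)
    then show ?thesis using power_card_minus_one_field[OF that] by simp
  qed
  then have red: "field_power_sum m = (\<Sum>x\<in>UNIV-{0::'a}. x ^ ?r)"
    unfolding field_power_sum_def using False
    by (subst sum.remove[of UNIV 0]) (auto intro: sum.cong)
  show ?thesis
  proof (cases "?Q dvd m")
    case True
    have "of_nat (card (UNIV - {0::'a})) = (-1::'a)"
      using card_field_ge_2[where 'a='a]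
      by (simp add: card_Diff_singleton of_nat_diff of_nat_card_field)
    then show ?thesis using True False red by simp
  next
    case ndvd: False
    have "0 < ?r" "?r < ?Q"
      using ndvd card_field_ge_2[where 'a='a] by (auto simp: dvd_eq_mod_eq_0)
    then obtain g :: 'a where g: "g \<noteq> 0" "g ^ ?r \<noteq> 1"
      by (rule exists_power_ne_one_field)
    have "(\<Sum>x\<in>UNIV-{0::'a}. x ^ ?r) = (\<Sum>x\<in>UNIV-{0::'a}. (g * x) ^ ?r)"
      by (rule sum.reindex_bij_witness[of _ "\<lambda>y. g * y" "\<lambda>y. y / g"]) (use g in auto)
    also have "\<dots> = g ^ ?r * (\<Sum>x\<in>UNIV-{0::'a}. x ^ ?r)"
      by (simp add: power_mult_distrib sum_distrib_left)
    finally have "(1 - g ^ ?r) * (\<Sum>x\<in>UNIV-{0::'a}. x ^ ?r) = 0"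
      by (simp add: algebra_simps)
    then show ?thesis using g red ndvd by simp
  qed
qed

lemma field_power_sum_card_minus_one:
  "field_power_sum (CARD('a) - 1) = (- 1 :: 'a::{field,finite})"
  using card_field_ge_2[where 'a='a] by (simp add: field_power_sum_eq)

lemma field_power_sum_nonzero_cases:
  assumes "field_power_sum m \<noteq> (0::'a::{field,finite})"
  shows "m = CARD('a) - 1 \<or> 2 * (CARD('a) - 1) \<le> m"
proof -
  have "0 < m" "(CARD('a) - 1) dvd m"
    using assms by (auto simp: field_power_sum_eq split: if_splits)
  then obtain j where "m = (CARD('a) - 1) * j" "j \<noteq> 0" by auto
  moreover from \<open>j \<noteq> 0\<close> have "j = 1 \<or> 2 \<le> j" by arith
  ultimately show ?thesis by auto
qed

lemma of_nat_card_choose_field: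
  assumes "0 < k" "k < CARD('a::{field,finite})"
  shows "of_nat (CARD('a) choose k) = (0::'a)"
proof -
  let ?q = "CARD('a)"
  \<comment> \<open>the middle terms of \<open>(x + 1)\<^sup>q\<close>: a polynomial of degree \<open>< q\<close> vanishing on all of \<open>'a\<close>\<close>
  define P :: "'a poly" where "P = (\<Sum>i\<in>{1..<?q}. monom (of_nat (?q choose i)) i)"
  have "degree P \<le> ?q - 1" unfolding P_def
    by (intro degree_sum_le) (auto intro: order.trans[OF degree_monom_le])
  have roots: "\<And>x. poly P x = 0"
  proof -
    fix x :: 'a
    have "(x + 1) ^ ?q = (\<Sum>i\<le>?q. of_nat (?q choose i) * x ^ i * 1 ^ (?q - i))"
      by (rule binomial_ring)
    also have "{..?q} = insert 0 (insert ?q {1..<?q})" using card_field_ge_2[where 'a='a] by auto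
    finally have "(x + 1) ^ ?q = 1 + (x ^ ?q + poly P x)"
      using card_field_ge_2[where 'a='a] by (simp add: P_def poly_sum poly_monom)
    then show "poly P x = 0" by (simp add: power_card_field)
  qed
  have "P = 0"
  proof (rule ccontr)
    assume "P \<noteq> 0"
    then have "card {x. poly P x = 0} \<le> degree P" by (rule card_poly_roots_bound)
    then show False
      using roots \<open>degree P \<le> ?q - 1\<close> card_field_ge_2[where 'a='a] by simp
  qed
  then have "coeff P k = 0" by simp
  then show ?thesis
    unfolding P_def coeff_sum using assms by (simp add: sum.delta)
qed

lemma poly_add_power_card_field:
  fixes x y :: "'a::{field,finite} poly"
  shows "(x + y) ^ CARD('a) = x ^ CARD('a) + y ^ CARD('a)"
proof -
  let ?q = "CARD('a)"
  have "(x + y) ^ ?q = (\<Sum>k\<le>?q. of_nat (?q choose k) * x ^ k * y ^ (?q - k))"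
    by (rule binomial_ring)
  also have "\<dots> = (\<Sum>k\<in>{0, ?q}. of_nat (?q choose k) * x ^ k * y ^ (?q - k))"
  proof (intro sum.mono_neutral_right ballI)
    fix k assume "k \<in> {..?q} - {0, ?q}"
    then have "of_nat (?q choose k) = (0 :: 'a poly)"
      using of_nat_card_choose_field[where 'a='a, of k] by (simp add: of_nat_poly)
    then show "of_nat (?q choose k) * x ^ k * y ^ (?q - k) = 0" by simp
  qed auto
  finally show ?thesis using card_field_ge_2[where 'a='a] by (simp add: add_ac)
qed

lemma poly_add_power_card_power_field:
  fixes x y :: "'a::{field,finite} poly"
  shows "(x + y) ^ (CARD('a) ^ j) = x ^ (CARD('a) ^ j) + y ^ (CARD('a) ^ j)"
proof (induction j)
  case (Suc j)
  have "(x + y) ^ (CARD('a) ^ Suc j) = ((x + y) ^ (CARD('a) ^ j)) ^ CARD('a)"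
    by (simp only: power_Suc2 power_mult)
  then show ?case
    by (simp only: Suc poly_add_power_card_field flip: power_mult power_Suc2)
qed simp

subsection \<open>Power sums of monic polynomials\<close>

lemma monic_deg_0: "monic_deg 0 = {1}"
  by (auto simp: monic_deg_def elim: degree_eq_zeroE)

lemma monic_deg_Suc:
  "monic_deg (Suc k) =
    (\<lambda>(x, a). pCons x a) ` (UNIV \<times> (monic_deg k :: 'a::{field,finite} poly set))"
proof (intro set_eqI iffI)
  fix p :: "'a poly" assume p: "p \<in> monic_deg (Suc k)"
  obtain x a where xa: "p = pCons x a" by (cases p)
  with p have "a \<noteq> 0" by (auto simp: monic_deg_def)
  with p xa have "a \<in> monic_deg k" by (auto simp: monic_deg_def)
  with xa show "p \<in> (\<lambda>(x, a). pCons x a) ` (UNIV \<times> monic_deg k)" by auto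
next
  fix p :: "'a poly" assume "p \<in> (\<lambda>(x, a). pCons x a) ` (UNIV \<times> monic_deg k)"
  then show "p \<in> monic_deg (Suc k)" by (auto simp: monic_deg_def)
qed

lemma finite_monic_deg: "finite (monic_deg k :: 'a::{field,finite} poly set)"
  by (induction k) (simp_all add: monic_deg_0 monic_deg_Suc)

lemma S_pow_0: "S_pow 0 n = (1 :: 'a::{field,finite} poly)"
  by (simp add: S_pow_def monic_deg_0)

lemma monic_degI:
  assumes "coeff p n = 1" "degree p \<le> n"
  shows "(p :: 'a::{field,finite} poly) \<in> monic_deg n"
proof -
  have "n \<le> degree p" using assms(1) by (intro le_degree) simp
  then show ?thesis using assms by (simp add: monic_deg_def)
qed

lemma BG_eq_sum_lessThan:
  assumes "\<And>k. m \<le> k \<Longrightarrow> S_pow k n = (0 :: 'a::{field,finite} poly)"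
  shows "(BG n :: 'a poly) = (\<Sum>k<m. S_pow k n)"
proof -
  have "{k. (S_pow k n :: 'a poly) \<noteq> 0} \<subseteq> {..<m}"
    using assms by (auto simp flip: not_le)
  then show ?thesis
    unfolding BG_def by (rule Sum_any.expand_superset[rotated]) simp
qed

lemma S_pow_Suc:
  "S_pow (Suc k) n = (\<Sum>x\<in>UNIV. \<Sum>a\<in>monic_deg k. pCons x a ^ n :: 'a::{field,finite} poly)"
proof -
  have inj: "inj_on (\<lambda>(x, a). pCons x a) (UNIV \<times> (monic_deg k :: 'a poly set))"
    by (auto simp: inj_on_def)
  show ?thesis
    unfolding S_pow_def monic_deg_Suc sum.reindex[OF inj]
    by (simp add: sum.cartesian_product split_def)
qed

lemma degree_S_pow_le: "degree (S_pow k n :: 'a::{field,finite} poly) \<le> k * n"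
  unfolding S_pow_def
  by (intro degree_sum_le finite_monic_deg)
     (auto simp: monic_deg_def intro: order.trans[OF degree_power_le])

lemma pCons_power_card_power:
  fixes a :: "'a::{field,finite} poly"
  shows "pCons x a ^ (CARD('a) ^ j) = [:x:] + (monom 1 1 * a) ^ (CARD('a) ^ j)"
proof -
  have "pCons x a = [:x:] + monom 1 1 * a"
    by (simp add: monom_Suc)
  then show ?thesis
    by (simp add: poly_add_power_card_power_field poly_const_pow power_card_power_field)
qed

definition digit_value :: "nat \<Rightarrow> (nat \<Rightarrow> nat) \<Rightarrow> nat set \<Rightarrow> nat" where
  "digit_value q r X = (\<Sum>t\<in>X. q ^ r t)"

definition power_sum_term ::
    "nat \<Rightarrow> (nat \<Rightarrow> nat) \<Rightarrow> nat set \<Rightarrow> nat set \<Rightarrow> 'a::{field,finite} poly" where "power_sum_term k r J S =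
    monom (field_power_sum (card S)) (digit_value CARD('a) r (J - S)) *
      S_pow k (digit_value CARD('a) r (J - S))"

lemma pCons_power_digit_value:
  fixes x :: "'a::{field,finite}" and a :: "'a poly"
  assumes "finite J"
  shows "pCons x a ^ digit_value CARD('a) r J = (\<Sum>S\<in>Pow J.
    monom (x ^ card S) (digit_value CARD('a) r (J - S)) * a ^ digit_value CARD('a) r (J - S))"
proof -
  let ?b = "monom 1 1 * a"
  have "pCons x a ^ digit_value CARD('a) r J = (\<Prod>t\<in>J. [:x:] + ?b ^ (CARD('a) ^ r t))"
    by (simp add: digit_value_def power_sum pCons_power_card_power)
  also have "\<dots> = (\<Sum>S\<in>Pow J. (\<Prod>t\<in>S. [:x:]) * (\<Prod>t\<in>J - S. ?b ^ (CARD('a) ^ r t)))"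
    by (rule prod_add[OF assms])
  also have "\<dots> = (\<Sum>S\<in>Pow J.
      monom (x ^ card S) (digit_value CARD('a) r (J - S)) * a ^ digit_value CARD('a) r (J - S))"
  proof (rule sum.cong[OF refl])
    fix S
    have "(\<Prod>t\<in>J - S. ?b ^ (CARD('a) ^ r t)) = ?b ^ digit_value CARD('a) r (J - S)"
      by (simp add: digit_value_def power_sum)
    also have "\<dots> = monom 1 (digit_value CARD('a) r (J - S)) * a ^ digit_value CARD('a) r (J - S)"
      by (simp add: power_mult_distrib monom_power)
    finally show "(\<Prod>t\<in>S. [:x:]) * (\<Prod>t\<in>J - S. ?b ^ (CARD('a) ^ r t)) =
        monom (x ^ card S) (digit_value CARD('a) r (J - S)) * a ^ digit_value CARD('a) r (J - S)"
      by (simp add: poly_const_pow smult_monom flip: mult_smult_left)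
  qed
  finally show ?thesis .
qed

lemma S_pow_Suc_digit_value:
  assumes "finite J"
  shows "(S_pow (Suc k) (digit_value CARD('a) r J) :: 'a::{field,finite} poly) =
    (\<Sum>S\<in>Pow J. power_sum_term k r J S)"
proof -
  have "(S_pow (Suc k) (digit_value CARD('a) r J) :: 'a poly) =
      (\<Sum>x\<in>UNIV. \<Sum>a\<in>monic_deg k. \<Sum>S\<in>Pow J.
        monom (x ^ card S) (digit_value CARD('a) r (J - S)) * a ^ digit_value CARD('a) r (J - S))"
    unfolding S_pow_Suc by (intro sum.cong refl pCons_power_digit_value assms)
  also have "\<dots> = (\<Sum>x\<in>UNIV. \<Sum>S\<in>Pow J. \<Sum>a\<in>monic_deg k.
        monom (x ^ card S) (digit_value CARD('a) r (J - S)) * a ^ digit_value CARD('a) r (J - S))"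
    by (rule sum.cong[OF refl], rule sum.swap)
  also have "\<dots> = (\<Sum>S\<in>Pow J. \<Sum>x\<in>UNIV. \<Sum>a\<in>monic_deg k.
        monom (x ^ card S) (digit_value CARD('a) r (J - S)) * a ^ digit_value CARD('a) r (J - S))"
    by (rule sum.swap)
  also have "\<dots> = (\<Sum>S\<in>Pow J. power_sum_term k r J S)"
    unfolding power_sum_term_def field_power_sum_def S_pow_def monom_sum sum_distrib_left
      sum_distrib_right
    by (rule sum.cong[OF refl], rule sum.swap)
  finally show ?thesis .
qed

subsection \<open>Digit blocks\<close>

lemma digit_value_union:
  "finite A \<Longrightarrow> finite B \<Longrightarrow> A \<inter> B = {} \<Longrightarrow>
    digit_value q r (A \<union> B) = digit_value q r A + digit_value q r B"
  unfolding digit_value_def by (rule sum.union_disjoint)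

lemma sum_by_fibres:
  assumes "finite J" "finite V" "\<forall>t\<in>J. r t \<in> V"
  shows "(\<Sum>t\<in>J. f (r t)) = (\<Sum>v\<in>V. card {t\<in>J. r t = v} * f v)"
proof -
  have "(\<Sum>t\<in>J. f (r t)) = (\<Sum>v\<in>V. \<Sum>t\<in>{t\<in>J. r t = v}. f (r t))"
    by (rule sum.group[symmetric]) (use assms in auto)
  also have "\<dots> = (\<Sum>v\<in>V. card {t\<in>J. r t = v} * f v)"
    by (intro sum.cong refl) simp
  finally show ?thesis .
qed

lemma geometric_digit_sum:
  assumes "1 \<le> (q::nat)" "h \<le> Suc b"
  shows "(\<Sum>v\<in>{h..b}. (q - 1) * q ^ v) + q ^ h = q ^ Suc b"
  using assms(2)
proof (induction b)
  case 0
  then have "h = 0 \<or> h = 1" by auto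
  then show ?case using assms(1) by auto
next
  case (Suc b)
  show ?case
  proof (cases "h = Suc (Suc b)")
    case False
    then have "h \<le> Suc b" using Suc.prems by simp
    then have "{h..Suc b} = insert (Suc b) {h..b}" by auto
    then have "(\<Sum>v\<in>{h..Suc b}. (q - 1) * q ^ v) =
        (q - 1) * q ^ Suc b + (\<Sum>v\<in>{h..b}. (q - 1) * q ^ v)"
      by simp
    moreover have "(q - 1) * x + x = q * x" for x using assms(1) by (cases q) auto
    ultimately show ?thesis using Suc.IH[OF \<open>h \<le> Suc b\<close>]
      by (metis (no_types, lifting) add.assoc power_Suc)
  qed simp
qed

text \<open>\<open>digit_block q K s J r\<close> says that \<open>J\<close>, with each \<open>t \<in> J\<close> contributing
  \<open>q ^ r t\<close>, lists the base-\<open>q\<close> digits of \<open>q\<^sup>s (q\<^sup>K\<^sup>+\<^sup>1 - 2)\<close>: \<open>q - 2\<close> copies of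
  position \<open>s\<close> and \<open>q - 1\<close> copies of each position \<open>s + 1, \<dots>, s + K\<close>.\<close>

definition digit_block :: "nat \<Rightarrow> nat \<Rightarrow> nat \<Rightarrow> nat set \<Rightarrow> (nat \<Rightarrow> nat) \<Rightarrow> bool" where
  "digit_block q K s J r \<longleftrightarrow> finite J \<and> (\<forall>t\<in>J. s \<le> r t \<and> r t \<le> s + K) \<and>
     card {t\<in>J. r t = s} = q - 2 \<and>
     (\<forall>v. s < v \<longrightarrow> v \<le> s + K \<longrightarrow> card {t\<in>J. r t = v} = q - 1)"

definition subset_value_bound :: "nat \<Rightarrow> nat \<Rightarrow> nat \<Rightarrow> nat" where
  "subset_value_bound q h b = q ^ Suc b - 2 * q ^ h"

lemma digit_block_upper:
  assumes blk: "digit_block q K s J r" and q: "q \<ge> 3" and h: "s + 1 \<le> h" "h \<le> Suc (s + K)"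
  shows "card {t\<in>J. h \<le> r t} = (Suc (s + K) - h) * (q - 1)"
    and "digit_value q r {t\<in>J. h \<le> r t} + q ^ h = q ^ Suc (s + K)"
proof -
  let ?J = "{t\<in>J. h \<le> r t}"
  have fin: "finite ?J" using blk by (simp add: digit_block_def)
  have vals: "\<forall>t\<in>?J. r t \<in> {h..s + K}" using blk by (auto simp: digit_block_def)
  have fibres: "card {t\<in>?J. r t = v} = q - 1" if "v \<in> {h..s + K}" for v
  proof -
    have "{t\<in>?J. r t = v} = {t\<in>J. r t = v}" using that by auto
    then show ?thesis using blk that h by (auto simp: digit_block_def)
  qed
  have "card ?J = (\<Sum>t\<in>?J. (\<lambda>_. 1::nat) (r t))" by simp
  also have "\<dots> = (\<Sum>v\<in>{h..s + K}. card {t\<in>?J. r t = v} * 1)"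
    by (rule sum_by_fibres[OF fin _ vals]) simp
  also have "\<dots> = (\<Sum>v\<in>{h..s + K}. q - 1)" using fibres by simp
  finally show "card ?J = (Suc (s + K) - h) * (q - 1)" by simp
  have "digit_value q r ?J = (\<Sum>v\<in>{h..s + K}. card {t\<in>?J. r t = v} * q ^ v)"
    unfolding digit_value_def by (rule sum_by_fibres[OF fin _ vals]) simp
  also have "\<dots> = (\<Sum>v\<in>{h..s + K}. (q - 1) * q ^ v)" using fibres by simp
  finally show "digit_value q r ?J + q ^ h = q ^ Suc (s + K)"
    using geometric_digit_sum[of q h "s + K"] q h by simp
qed

lemma digit_block_upper_value:
  assumes blk: "digit_block q K s J r" and q: "q \<ge> 3" and h: "s + 1 \<le> h" "h \<le> s + K"
  shows "digit_value q r {t\<in>J. h \<le> r t} = q ^ h + subset_value_bound q h (s + K)"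
proof -
  have "digit_value q r {t\<in>J. h \<le> r t} + q ^ h = q ^ Suc (s + K)"
    using digit_block_upper[OF blk q h(1)] h by auto
  moreover have "2 * q ^ h \<le> q ^ Suc h" using q by simp
  moreover have "q ^ Suc h \<le> q ^ Suc (s + K)" using q h by (intro power_increasing) auto
  ultimately show ?thesis unfolding subset_value_bound_def by linarith
qed

lemma card_digit_block:
  assumes blk: "digit_block q K s J r" and q: "q \<ge> 3"
  shows "card J = Suc K * (q - 1) - 1"
proof -
  have fin: "finite J" using blk by (simp add: digit_block_def)
  have split: "J = {t\<in>J. r t = s} \<union> {t\<in>J. s + 1 \<le> r t}"
    using blk by (auto simp: digit_block_def)
  have "card J = card {t\<in>J. r t = s} + card {t\<in>J. s + 1 \<le> r t}"
    using fin by (subst split, subst card_Un_disjoint) auto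
  also have "\<dots> = (q - 2) + K * (q - 1)"
    using blk digit_block_upper(1)[OF blk q, of "s + 1"] by (simp add: digit_block_def)
  finally show ?thesis using q by (simp add: algebra_simps)
qed

lemma digit_value_digit_block:
  assumes blk: "digit_block q K s J r" and q: "q \<ge> 3"
  shows "digit_value q r J = q ^ s * (q ^ Suc K - 2)"
proof -
  have fin: "finite J" using blk by (simp add: digit_block_def)
  have split: "J = {t\<in>J. r t = s} \<union> {t\<in>J. s + 1 \<le> r t}"
    using blk by (auto simp: digit_block_def)
  have "digit_value q r J =
      digit_value q r {t\<in>J. r t = s} + digit_value q r {t\<in>J. s + 1 \<le> r t}"
    using fin by (subst split, subst digit_value_union) auto
  moreover have "digit_value q r {t\<in>J. r t = s} = (q - 2) * q ^ s"
    using blk by (simp add: digit_value_def digit_block_def)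
  moreover have "(q - 2) * q ^ s + 2 * q ^ s = q ^ Suc s"
  proof -
    have "(q - 2) * q ^ s + 2 * q ^ s = (q - 2 + 2) * q ^ s" by (simp only: add_mult_distrib)
    also have "\<dots> = q ^ Suc s"
      using le_add_diff_inverse2[of 2 q] q by (simp del: le_add_diff_inverse2)
    finally show ?thesis .
  qed
  moreover have "digit_value q r {t\<in>J. s + 1 \<le> r t} + q ^ Suc s = q ^ Suc (s + K)"
    using digit_block_upper(2)[OF blk q, of "s + 1"] by simp
  ultimately have "digit_value q r J + 2 * q ^ s = q ^ (s + Suc K)" by simp
  then show ?thesis by (simp add: diff_mult_distrib2 power_add algebra_simps)
qed

text \<open>A subset \<open>X\<close> of fewer than \<open>|{t \<in> J. h \<le> r t}|\<close> digits misses at least one more digit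
  of value \<open>\<ge> q\<^sup>h\<close> than it has digits of value \<open>\<le> q\<^sup>h\<^sup>-\<^sup>1\<close>.\<close>

lemma digit_block_subset_split:
  assumes blk: "digit_block q K s J r" and q: "q \<ge> 3" and h: "s + 1 \<le> h" "h \<le> s + K"
    and X: "X \<subseteq> J" "card X \<le> (Suc (s + K) - h) * (q - 1) - 1"
  defines "Xlo \<equiv> {t\<in>X. r t < h}" and "Z \<equiv> {t\<in>J. h \<le> r t} - X"
  shows "digit_value q r X + digit_value q r Z =
      digit_value q r Xlo + q ^ h + subset_value_bound q h (s + K)"
    and "card Xlo + 1 \<le> card Z"
    and "digit_value q r Xlo \<le> card Xlo * q ^ (h - 1)"
    and "card Z * q ^ h \<le> digit_value q r Z"
proof -
  let ?Jhi = "{t\<in>J. h \<le> r t}"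
  let ?Xhi = "X \<inter> ?Jhi"
  have finJ: "finite J" using blk by (simp add: digit_block_def)
  then have finX: "finite X" using X finite_subset by blast
  have finZ: "finite Z" unfolding Z_def using finJ by simp
  have finlo: "finite Xlo" unfolding Xlo_def using finX by simp
  have finhi: "finite ?Xhi" using finX by simp
  have X_split: "X = Xlo \<union> ?Xhi" "Xlo \<inter> ?Xhi = {}" using X unfolding Xlo_def by auto
  have J_split: "?Jhi = ?Xhi \<union> Z" "?Xhi \<inter> Z = {}" unfolding Z_def by auto
  have "digit_value q r X = digit_value q r Xlo + digit_value q r ?Xhi"
    using digit_value_union[OF finlo finhi X_split(2)] X_split(1) by simp
  moreover have "digit_value q r ?Jhi = digit_value q r ?Xhi + digit_value q r Z"
    using digit_value_union[OF finhi finZ J_split(2)] J_split(1) by simp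
  ultimately show "digit_value q r X + digit_value q r Z =
      digit_value q r Xlo + q ^ h + subset_value_bound q h (s + K)"
    using digit_block_upper_value[OF blk q h] by simp
  have "1 \<le> Suc (s + K) - h" "1 \<le> q - 1" using h q by arith+
  then have pos: "1 \<le> (Suc (s + K) - h) * (q - 1)" using mult_le_mono by fastforce
  have "card X = card Xlo + card ?Xhi"
    using card_Un_disjoint[OF finlo finhi X_split(2)] X_split(1) by simp
  moreover have "card ?Jhi = card ?Xhi + card Z"
    using card_Un_disjoint[OF finhi finZ J_split(2)] J_split(1) by simp
  moreover have "card ?Jhi = (Suc (s + K) - h) * (q - 1)"
    using digit_block_upper(1)[OF blk q h(1)] h by simp
  ultimately show "card Xlo + 1 \<le> card Z" using pos X(2) by linarith
  have "q ^ r t \<le> q ^ (h - 1)" if "t \<in> Xlo" for t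
    using q h that by (auto simp: Xlo_def intro!: power_increasing)
  then show "digit_value q r Xlo \<le> card Xlo * q ^ (h - 1)"
    unfolding digit_value_def using sum_bounded_above[of Xlo "\<lambda>t. q ^ r t" "q ^ (h - 1)"] by simp
  show "card Z * q ^ h \<le> digit_value q r Z"
    unfolding digit_value_def using sum_bounded_below[of Z "q ^ h" "\<lambda>t. q ^ r t"] q
    by (simp add: Z_def power_increasing)
qed

lemma digit_block_subset_value_le:
  assumes blk: "digit_block q K s J r" and q: "q \<ge> 3" and h: "s + 1 \<le> h" "h \<le> s + K"
    and X: "X \<subseteq> J" "card X \<le> (Suc (s + K) - h) * (q - 1) - 1"
  shows "digit_value q r X \<le> subset_value_bound q h (s + K)"
proof -
  let ?lo = "{t\<in>X. r t < h}" and ?Z = "{t\<in>J. h \<le> r t} - X"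
  note split = digit_block_subset_split[OF blk q h X]
  have "card ?lo * q ^ (h - 1) \<le> card ?lo * q ^ h"
    using q by (intro mult_le_mono2 power_increasing) auto
  moreover have "card ?lo * q ^ h + q ^ h \<le> card ?Z * q ^ h"
    using split(2) by (metis add_mult_distrib mult_1 mult_le_mono1)
  ultimately show ?thesis using split(1,3,4) by linarith
qed

lemma digit_block_subset_value_eq:
  assumes blk: "digit_block q K s J r" and q: "q \<ge> 3" and K: "1 \<le> K"
    and X: "X \<subseteq> J" "card X \<le> K * (q - 1) - 1"
    and eq: "subset_value_bound q (s + 1) (s + K) \<le> digit_value q r X"
  shows "\<exists>z\<in>J. r z = s + 1 \<and> X = {t\<in>J. s + 1 \<le> r t} - {z}"
proof -
  let ?lo = "{t\<in>X. r t < s + 1}" and ?Z = "{t\<in>J. s + 1 \<le> r t} - X"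
  have "card X \<le> (Suc (s + K) - (s + 1)) * (q - 1) - 1" using X(2) by simp
  note split = digit_block_subset_split[OF blk q _ _ X(1) this, simplified]
  have split1: "digit_value q r X + digit_value q r ?Z =
      digit_value q r ?lo + q * q ^ s + subset_value_bound q (Suc s) (s + K)"
    and split2: "card ?lo + 1 \<le> card ?Z"
    and split3: "digit_value q r ?lo \<le> card ?lo * q ^ s"
    and split4: "card ?Z * (q * q ^ s) \<le> digit_value q r ?Z"
    using split K by auto
  have Z: "card ?Z * (q * q ^ s) \<le> card ?lo * q ^ s + q * q ^ s"
    using split1 split3 split4 eq by simp
  have lo: "card ?lo = 0"
  proof (rule ccontr)
    assume "card ?lo \<noteq> 0"
    then have "card ?lo * q ^ s < card ?lo * (q * q ^ s)" using q by simp
    moreover have "(card ?lo + 1) * (q * q ^ s) \<le> card ?Z * (q * q ^ s)"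
      using split2 by (rule mult_le_mono1)
    moreover have "(card ?lo + 1) * (q * q ^ s) = card ?lo * (q * q ^ s) + q * q ^ s"
      by (simp add: algebra_simps)
    ultimately show False using Z by linarith
  qed
  have "card ?Z * (q * q ^ s) \<le> 1 * (q * q ^ s)" using Z lo by simp
  then have "card ?Z \<le> 1" using q by (subst (asm) mult_le_cancel2) simp
  with split2 lo have "card ?Z = 1" by linarith
  then obtain z where z: "?Z = {z}" by (rule card_1_singletonE)
  have "digit_value q r ?Z \<le> q * q ^ s" using split1 split3 lo eq by simp
  then have "q ^ r z \<le> q ^ Suc s" using z by (simp add: digit_value_def)
  then have "r z \<le> Suc s" using q power_le_imp_le_exp[of q "r z" "Suc s"] by (simp del: power_Suc)
  moreover have "z \<in> J" "Suc s \<le> r z" using z by auto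
  ultimately have "r z = s + 1" by simp
  have "finite X" using blk X(1) by (auto simp: digit_block_def finite_subset)
  then have "?lo = {}" using lo by simp
  then have "X \<subseteq> {t\<in>J. s + 1 \<le> r t}" using X(1) by auto
  then have "X = {t\<in>J. s + 1 \<le> r t} - {z}" using z by auto
  then show ?thesis using \<open>r z = s + 1\<close> \<open>z \<in> J\<close> by blast
qed

lemma digit_block_remove_bottom:
  assumes blk: "digit_block q (Suc k) s J r" and q: "q \<ge> 3" and z: "z \<in> J" "r z = s + 1"
  defines "S \<equiv> insert z {t\<in>J. r t = s}"
  shows "digit_block q k (s + 1) (J - S) r" "card S = q - 1"
    "digit_value q r (J - S) = subset_value_bound q (s + 1) (s + Suc k)"
proof -
  have fin: "finite J" using blk by (simp add: digit_block_def)
  have rest: "J - S = {t\<in>J. s + 1 \<le> r t} - {z}"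
    unfolding S_def using blk z by (auto simp: digit_block_def)
  have "z \<notin> {t\<in>J. r t = s}" using z by auto
  then show "card S = q - 1" unfolding S_def using fin blk q by (simp add: digit_block_def)
  have "digit_value q r ({t\<in>J. s + 1 \<le> r t} - {z}) + q ^ r z =
      digit_value q r {t\<in>J. s + 1 \<le> r t}"
    unfolding digit_value_def using sum.remove[of "{t\<in>J. s + 1 \<le> r t}" z "\<lambda>t. q ^ r t"] fin z
    by simp
  then show "digit_value q r (J - S) = subset_value_bound q (s + 1) (s + Suc k)"
    using digit_block_upper_value[OF blk q, of "s + 1"] z rest by simp
  have range: "\<forall>t\<in>J. s \<le> r t \<and> r t \<le> s + Suc k"
    and fibres: "\<forall>v. s < v \<longrightarrow> v \<le> s + Suc k \<longrightarrow> card {t\<in>J. r t = v} = q - 1"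
    using blk by (simp_all add: digit_block_def)
  show "digit_block q k (s + 1) (J - S) r"
    unfolding digit_block_def
  proof (intro conjI allI impI ballI)
    show "finite (J - S)" using fin by simp
  next
    fix t assume "t \<in> J - S" then show "s + 1 \<le> r t" using rest by blast
  next
    fix t assume "t \<in> J - S" then show "r t \<le> s + 1 + k" using range by auto
  next
    have "{t \<in> J - S. r t = s + 1} = {t\<in>J. r t = s + 1} - {z}" unfolding rest by auto
    moreover have "card {t\<in>J. r t = s + 1} = q - 1" using fibres by simp
    ultimately show "card {t \<in> J - S. r t = s + 1} = q - 2" using z fin by simp
  next
    fix v assume v: "s + 1 < v" "v \<le> s + 1 + k"
    have "{t \<in> J - S. r t = v} = {t\<in>J. r t = v}" unfolding rest using v z by auto
    then show "card {t \<in> J - S. r t = v} = q - 1" using fibres v by simp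
  qed
qed

fun block_degree :: "nat \<Rightarrow> nat \<Rightarrow> nat \<Rightarrow> nat" where
  "block_degree q 0 s = 0"
| "block_degree q (Suc k) s = subset_value_bound q (s + 1) (s + Suc k) + block_degree q k (s + 1)"

lemma block_degree_eq_sum:
  "block_degree q k s = (\<Sum>i<k. subset_value_bound q (s + i + 1) (s + k))"
proof (induction k arbitrary: s)
  case (Suc k)
  have "(\<Sum>i<Suc k. subset_value_bound q (s + i + 1) (s + Suc k)) =
      subset_value_bound q (s + 1) (s + Suc k) +
      (\<Sum>i<k. subset_value_bound q ((s + 1) + i + 1) ((s + 1) + k))"
    by (subst sum.lessThan_Suc_shift) simp
  then show ?case by (simp add: Suc.IH)
qed simp

lemma block_degree_closed_form:
  assumes q: "q \<ge> (3::nat)"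
  shows "real (block_degree q K s) =
    real q ^ s * (real K * real q ^ Suc K - 2 * (real q ^ Suc K - real q) / (real q - 1))"
proof (induction K arbitrary: s)
  case (Suc K)
  define x where "x = real q"
  have "x - 1 \<noteq> 0" using q by (simp add: x_def)
  have "2 * q ^ (s + 1) \<le> q ^ Suc (s + 1)" using q by simp
  also have "\<dots> \<le> q ^ Suc (s + Suc K)" using q by (intro power_increasing) auto
  finally have bound: "real (subset_value_bound q (s + 1) (s + Suc K)) =
      x ^ s * (x ^ Suc (Suc K) - 2 * x)"
    by (simp add: subset_value_bound_def of_nat_diff algebra_simps power_add x_def)
  show ?case
    unfolding block_degree.simps of_nat_add bound Suc.IH x_def[symmetric]
    using \<open>x - 1 \<noteq> 0\<close> by (simp add: field_simps)
qed simp

lemma block_degree_gt: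
  assumes q: "q \<ge> (3::nat)" and K: "1 \<le> K"
  shows "(K - 1) * (q ^ Suc K - 2) < block_degree q K 0"
proof -
  define x X where "x = real q" and "X = real q ^ Suc K"
  have "q \<le> q ^ Suc K" using q by simp
  then have x: "3 \<le> x" "x \<le> X" using q by (simp_all add: x_def X_def)
  have "0 \<le> (x - 3) * (X - x)" using x by simp
  then have "2 * (X - x) \<le> (X - x) * (x - 1)" by (simp add: algebra_simps)
  then have "2 * (X - x) / (x - 1) \<le> X - x" using x by (simp add: divide_le_eq)
  then have "(real K - 1) * (X - 2) < real K * X - 2 * (X - x) / (x - 1)"
    using x K by (simp add: algebra_simps)
  moreover have "2 \<le> q ^ Suc K" using \<open>q \<le> q ^ Suc K\<close> q by linarith
  then have "real ((K - 1) * (q ^ Suc K - 2)) = (real K - 1) * (X - 2)"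
    using K by (simp add: X_def of_nat_diff del: power_Suc)
  moreover have "real (block_degree q K 0) = real K * X - 2 * (X - x) / (x - 1)"
    using block_degree_closed_form[OF q, of K 0] by (simp add: x_def X_def)
  ultimately show ?thesis by linarith
qed

text \<open>A crude a-priori bound on the degree of \<open>S_pow k\<close> at a digit multiset \<open>J\<close> with
  \<open>|J| = (k + 1)(q - 1) - 1\<close>: each step of the recursion removes \<open>q - 1\<close> digits and raises the
  degree by at most the value of the remaining ones.\<close>

definition max_subset_value :: "nat \<Rightarrow> (nat \<Rightarrow> nat) \<Rightarrow> nat set \<Rightarrow> nat \<Rightarrow> nat" where
  "max_subset_value q r J m = Max (digit_value q r ` {X. X \<subseteq> J \<and> card X \<le> m})"

definition degree_bound :: "nat \<Rightarrow> nat \<Rightarrow> nat set \<Rightarrow> (nat \<Rightarrow> nat) \<Rightarrow> nat" where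
  "degree_bound q k J r = (\<Sum>i<k. max_subset_value q r J ((k - i) * (q - 1) - 1))"

lemma max_subset_value_ge:
  "finite J \<Longrightarrow> X \<subseteq> J \<Longrightarrow> card X \<le> m \<Longrightarrow> digit_value q r X \<le> max_subset_value q r J m"
  unfolding max_subset_value_def by (rule Max_ge) auto

lemma max_subset_value_le:
  "finite J \<Longrightarrow> (\<And>X. X \<subseteq> J \<Longrightarrow> card X \<le> m \<Longrightarrow> digit_value q r X \<le> B) \<Longrightarrow>
    max_subset_value q r J m \<le> B"
  unfolding max_subset_value_def by (subst Max_le_iff) auto

lemma max_subset_value_mono:
  "finite J \<Longrightarrow> J' \<subseteq> J \<Longrightarrow> max_subset_value q r J' m \<le> max_subset_value q r J m"
  by (rule max_subset_value_le) (auto simp: finite_subset intro: max_subset_value_ge)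

lemma degree_bound_step:
  assumes "finite J" "S \<subseteq> J" "card (J - S) \<le> Suc k * (q - 1) - 1"
  shows "digit_value q r (J - S) + degree_bound q k (J - S) r \<le> degree_bound q (Suc k) J r"
proof -
  let ?rest = "\<Sum>i<k. max_subset_value q r J ((k - i) * (q - 1) - 1)"
  have "degree_bound q (Suc k) J r = max_subset_value q r J (Suc k * (q - 1) - 1) + ?rest"
    unfolding degree_bound_def by (subst sum.lessThan_Suc_shift) simp
  moreover have "digit_value q r (J - S) \<le> max_subset_value q r J (Suc k * (q - 1) - 1)"
    using assms by (intro max_subset_value_ge) auto
  moreover have "degree_bound q k (J - S) r \<le> ?rest"
    unfolding degree_bound_def using assms by (intro sum_mono max_subset_value_mono) auto
  ultimately show ?thesis by linarith
qed

lemma degree_bound_le_block_degree: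
  assumes blk: "digit_block q (Suc k) s J r" and q: "q \<ge> 3" and X: "X \<subseteq> J"
  shows "degree_bound q k X r \<le> block_degree q k (s + 1)"
  unfolding degree_bound_def block_degree_eq_sum
proof (intro sum_mono)
  fix i assume i: "i \<in> {..<k}"
  show "max_subset_value q r X ((k - i) * (q - 1) - 1) \<le>
      subset_value_bound q (s + 1 + i + 1) (s + 1 + k)"
  proof (rule max_subset_value_le)
    show "finite X" using blk X finite_subset by (auto simp: digit_block_def)
    fix Y assume Y: "Y \<subseteq> X" "card Y \<le> (k - i) * (q - 1) - 1"
    have "digit_value q r Y \<le> subset_value_bound q (s + i + 2) (s + Suc k)"
      by (rule digit_block_subset_value_le[OF blk q]) (use i Y X in auto)
    then show "digit_value q r Y \<le> subset_value_bound q (s + 1 + i + 1) (s + 1 + k)" by simp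
  qed
qed

lemma div_eq_iff_nat: "0 < (Q::nat) \<Longrightarrow> x div Q = v \<longleftrightarrow> v * Q \<le> x \<and> x < Suc v * Q"
  by (metis div_less_iff_less_mult div_nat_eqI div_times_less_eq_dividend lessI mult.commute)

text \<open>The digits of \<open>q\<^sup>K\<^sup>+\<^sup>1 - 2\<close>: group \<open>1, \<dots>, (K + 1)(q - 1) - 1\<close> into consecutive
  runs of length \<open>q - 1\<close>; the first run lacks \<open>0\<close> and so has only \<open>q - 2\<close> elements.\<close>

lemma digit_block_initial:
  assumes q: "q \<ge> (3::nat)"
  shows "digit_block q K 0 {..<Suc K * (q - 1) - 1} (\<lambda>t. (t + 1) div (q - 1))"
  unfolding digit_block_def
proof (intro conjI ballI allI impI)
  let ?Q = "q - 1"
  have Q: "0 < ?Q" using q by simp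
  show "finite {..<Suc K * (q - 1) - 1}" by simp
  fix t assume t: "t \<in> {..<Suc K * (q - 1) - 1}"
  show "0 \<le> (t + 1) div (q - 1)" by simp
  have "t + 1 < Suc K * ?Q" using t by auto
  then have "(t + 1) div (q - 1) \<le> K" using Q by (metis div_less_iff_less_mult less_Suc_eq_le)
  then show "(t + 1) div (q - 1) \<le> 0 + K" by simp
next
  let ?Q = "q - 1"
  have Q: "0 < ?Q" using q by simp
  have "?Q \<le> Suc K * ?Q" by simp
  then have "{t \<in> {..<Suc K * ?Q - 1}. (t + 1) div ?Q = 0} = {..<?Q - 1}"
    using Q by (auto simp: div_eq_iff_nat)
  then show "card {t \<in> {..<Suc K * (q - 1) - 1}. (t + 1) div (q - 1) = 0} = q - 2" by simp
next
  let ?Q = "q - 1"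
  have Q: "0 < ?Q" using q by simp
  fix v assume v: "0 < v" "v \<le> 0 + K"
  define a where "a = v * ?Q"
  define b where "b = Suc K * ?Q"
  have ab: "a + ?Q \<le> b" unfolding a_def b_def using v by (simp add: add_mult_distrib2[symmetric])
  have a1: "1 \<le> a" unfolding a_def using v Q by simp
  have "{t \<in> {..<b - 1}. (t + 1) div ?Q = v} = {t. t < b - 1 \<and> a \<le> t + 1 \<and> t + 1 < a + ?Q}"
    unfolding a_def using Q by (auto simp: div_eq_iff_nat add.commute)
  also have "\<dots> = {a - 1..<a + ?Q - 1}" using ab a1 by auto
  finally show "card {t \<in> {..<Suc K * (q - 1) - 1}. (t + 1) div (q - 1) = v} = q - 1"
    using a1 unfolding b_def by simp
qed

subsection \<open>Degrees of the power sums\<close>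

lemma degree_monom_mult_le: "degree (monom c n * p) \<le> n + degree p"
  using degree_mult_le[of "monom c n" p] degree_monom_le[of c n] by linarith

lemma S_pow_digit_value_eq_0:
  assumes "finite J" "card J < k * (CARD('a) - 1)"
  shows "(S_pow k (digit_value CARD('a) r J) :: 'a::{field,finite} poly) = 0"
  using assms
proof (induction k arbitrary: J)
  case (Suc k)
  have "power_sum_term k r J S = (0 :: 'a poly)" if S: "S \<subseteq> J" for S
  proof (cases "field_power_sum (card S) = (0::'a)")
    case False
    then have "CARD('a) - 1 \<le> card S"
      using field_power_sum_nonzero_cases by fastforce
    moreover have "card (J - S) = card J - card S" "card S \<le> card J"
      using S Suc.prems(1) by (auto simp: card_Diff_subset finite_subset card_mono)
    ultimately have "card (J - S) < k * (CARD('a) - 1)" using Suc.prems(2) by simp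
    then show ?thesis using Suc.IH Suc.prems(1) by (simp add: power_sum_term_def)
  qed (simp add: power_sum_term_def)
  then show ?case by (simp add: S_pow_Suc_digit_value[OF Suc.prems(1)])
qed simp

text \<open>Subsets of size above \<open>q - 1\<close> leave too few digits for \<open>S_pow k\<close> to be nonzero.\<close>

lemma power_sum_term_eq_0:
  assumes "finite J" "S \<subseteq> J" "card J = Suc (Suc k) * (CARD('a) - 1) - 1"
    and "card S \<noteq> CARD('a) - 1"
  shows "(power_sum_term k r J S :: 'a::{field,finite} poly) = 0"
proof (cases "field_power_sum (card S) = (0::'a)")
  case False
  then have "2 * (CARD('a) - 1) \<le> card S"
    using field_power_sum_nonzero_cases assms(4) by blast
  moreover have "card (J - S) = card J - card S" "card S \<le> card J"
    using assms(1,2) by (auto simp: card_Diff_subset finite_subset card_mono)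
  ultimately have "card (J - S) < k * (CARD('a) - 1)"
    using assms(3) card_field_ge_2[where 'a='a] by (simp add: algebra_simps)
  then show ?thesis
    using assms(1) by (simp add: power_sum_term_def S_pow_digit_value_eq_0)
qed (simp add: power_sum_term_def)

lemma card_Diff_of_card_eq:
  assumes "finite J" "S \<subseteq> J" "card J = Suc (Suc k) * (CARD('a::{field,finite}) - 1) - 1"
    and "card S = CARD('a) - 1"
  shows "card (J - S) = Suc k * (CARD('a) - 1) - 1"
  using assms card_field_ge_2[where 'a='a]
  by (simp add: card_Diff_subset finite_subset algebra_simps)

lemma degree_S_pow_digit_value_le:
  assumes "finite J" "card J = Suc k * (CARD('a) - 1) - 1"
  shows "degree (S_pow k (digit_value CARD('a) r J) :: 'a::{field,finite} poly) \<le>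
    degree_bound CARD('a) k J r"
  using assms
proof (induction k arbitrary: J)
  case 0
  then show ?case by (simp add: S_pow_0)
next
  case (Suc k)
  show ?case
    unfolding S_pow_Suc_digit_value[OF Suc.prems(1)]
  proof (rule degree_sum_le)
    show "finite (Pow J)" using Suc.prems(1) by simp
    fix S assume "S \<in> Pow J"
    then have S: "S \<subseteq> J" by simp
    show "degree (power_sum_term k r J S :: 'a poly) \<le> degree_bound CARD('a) (Suc k) J r"
    proof (cases "card S = CARD('a) - 1")
      case True
      then have card: "card (J - S) = Suc k * (CARD('a) - 1) - 1"
        using card_Diff_of_card_eq Suc.prems S by blast
      have "degree (power_sum_term k r J S :: 'a poly) \<le>
          digit_value CARD('a) r (J - S) +
          degree (S_pow k (digit_value CARD('a) r (J - S)) :: 'a poly)"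
        unfolding power_sum_term_def by (rule degree_monom_mult_le)
      also have "\<dots> \<le> digit_value CARD('a) r (J - S) + degree_bound CARD('a) k (J - S) r"
        using Suc.IH[of "J - S"] Suc.prems(1) card by simp
      also have "\<dots> \<le> degree_bound CARD('a) (Suc k) J r"
        using Suc.prems(1) S card by (intro degree_bound_step) auto
      finally show ?thesis .
    next
      case False
      then show ?thesis using power_sum_term_eq_0[OF Suc.prems(1) S Suc.prems(2)] by simp
    qed
  qed
qed

lemma degree_power_sum_term_less:
  assumes blk: "digit_block CARD('a::{field,finite}) (Suc k) s J r" and q: "CARD('a) \<ge> 3"
    and S: "S \<subseteq> J"
    and not_bottom: "\<And>z. z \<in> J \<Longrightarrow> r z = s + 1 \<Longrightarrow> S \<noteq> insert z {t\<in>J. r t = s}"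
  shows "power_sum_term k r J S = (0 :: 'a poly) \<or>
    degree (power_sum_term k r J S :: 'a poly) < block_degree CARD('a) (Suc k) s"
proof (cases "card S = CARD('a) - 1")
  case True
  let ?W = "subset_value_bound CARD('a) (s + 1) (s + Suc k)"
  have fin: "finite J" using blk by (simp add: digit_block_def)
  have card: "card (J - S) = Suc k * (CARD('a) - 1) - 1"
    using card_Diff_of_card_eq[OF fin S card_digit_block[OF blk q] True] .
  have "digit_value CARD('a) r (J - S) \<le> ?W"
    using card by (intro digit_block_subset_value_le[OF blk q]) auto
  moreover have "digit_value CARD('a) r (J - S) \<noteq> ?W"
  proof
    assume "digit_value CARD('a) r (J - S) = ?W"
    then have "\<exists>z\<in>J. r z = s + 1 \<and> J - S = {t\<in>J. s + 1 \<le> r t} - {z}"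
      using card by (intro digit_block_subset_value_eq[OF blk q]) auto
    then obtain z where z: "z \<in> J" "r z = s + 1" "J - S = {t\<in>J. s + 1 \<le> r t} - {z}"
      by blast
    have "J - {t\<in>J. s + 1 \<le> r t} = {t\<in>J. r t = s}"
      using blk by (auto simp: digit_block_def)
    moreover have "S = J - (J - S)" using S by blast
    ultimately have "S = insert z {t\<in>J. r t = s}"
      using z by blast
    with z not_bottom show False by blast
  qed
  ultimately have "digit_value CARD('a) r (J - S) < ?W" by simp
  have "degree (power_sum_term k r J S :: 'a poly) \<le>
      digit_value CARD('a) r (J - S) + degree (S_pow k (digit_value CARD('a) r (J - S)) :: 'a poly)"
    unfolding power_sum_term_def by (rule degree_monom_mult_le)
  also have "degree (S_pow k (digit_value CARD('a) r (J - S)) :: 'a poly) \<le>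
      degree_bound CARD('a) k (J - S) r"
    using fin card by (intro degree_S_pow_digit_value_le) auto
  also have "\<dots> \<le> block_degree CARD('a) k (s + 1)"
    by (rule degree_bound_le_block_degree[OF blk q]) auto
  finally show ?thesis
    using \<open>digit_value CARD('a) r (J - S) < ?W\<close> by simp
next
  case False
  have "finite J" using blk by (simp add: digit_block_def)
  then show ?thesis
    using power_sum_term_eq_0[OF _ S card_digit_block[OF blk q] False] by simp
qed

lemma power_sum_term_bottom:
  assumes blk: "digit_block CARD('a::{field,finite}) (Suc k) s J r" and q: "CARD('a) \<ge> 3"
    and z: "z \<in> J" "r z = s + 1"
  defines "S \<equiv> insert z {t\<in>J. r t = s}"
  shows "(power_sum_term k r J S :: 'a poly) =
    monom (-1) (subset_value_bound CARD('a) (s + 1) (s + Suc k)) *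
      S_pow k (digit_value CARD('a) r (J - S))"
  unfolding power_sum_term_def digit_block_remove_bottom(2)[OF blk q z, folded S_def]
    field_power_sum_card_minus_one
  by (subst (1) digit_block_remove_bottom(3)[OF blk q z, folded S_def]) (rule refl)

theorem S_pow_digit_block:
  assumes "digit_block CARD('a::{field,finite}) k s J r" "CARD('a) \<ge> 3"
  shows "(S_pow k (digit_value CARD('a) r J) :: 'a poly) \<in> monic_deg (block_degree CARD('a) k s)"
  using assms
proof (induction k arbitrary: s J)
  case 0
  then show ?case by (simp add: S_pow_0 monic_deg_0)
next
  case (Suc k)
  note blk = Suc.prems(1) and q = Suc.prems(2)
  let ?D = "block_degree CARD('a) (Suc k) s"
  let ?W = "subset_value_bound CARD('a) (s + 1) (s + Suc k)"
  define bottoms where "bottoms = (\<lambda>z. insert z {t\<in>J. r t = s}) ` {t\<in>J. r t = s + 1}"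
  have fin: "finite J" using blk by (simp add: digit_block_def)
  have summand: "degree (power_sum_term k r J S :: 'a poly) \<le> ?D \<and>
      coeff (power_sum_term k r J S :: 'a poly) ?D = (if S \<in> bottoms then -1 else 0)"
    if S: "S \<subseteq> J" for S
  proof (cases "S \<in> bottoms")
    case True
    then obtain z where z: "z \<in> J" "r z = s + 1" "S = insert z {t\<in>J. r t = s}"
      unfolding bottoms_def by blast
    let ?P = "S_pow k (digit_value CARD('a) r (J - S)) :: 'a poly"
    have "?P \<in> monic_deg (block_degree CARD('a) k (s + 1))"
      using Suc.IH[OF digit_block_remove_bottom(1)[OF blk q z(1,2), folded z(3)] q] .
    then have "degree ?P = block_degree CARD('a) k (s + 1)" "lead_coeff ?P = 1"
      by (auto simp: monic_deg_def)
    then show ?thesis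
      using True degree_monom_mult_le[of "-1::'a" ?W ?P]
      by (simp add: power_sum_term_bottom[OF blk q z(1,2), folded z(3)] coeff_monom_mult)
  next
    case False
    then have "power_sum_term k r J S = (0 :: 'a poly) \<or>
        degree (power_sum_term k r J S :: 'a poly) < ?D"
      using degree_power_sum_term_less[OF blk q S] unfolding bottoms_def by blast
    then show ?thesis using False by (auto simp: coeff_eq_0)
  qed
  have "card bottoms = CARD('a) - 1"
  proof -
    have "inj_on (\<lambda>z. insert z {t\<in>J. r t = s}) {t\<in>J. r t = s + 1}"
      by (auto simp: inj_on_def)
    then show ?thesis
      using blk by (simp add: bottoms_def card_image digit_block_def)
  qed
  moreover have "bottoms \<subseteq> Pow J" unfolding bottoms_def by auto
  ultimately have "coeff (\<Sum>S\<in>Pow J. power_sum_term k r J S :: 'a poly) ?D = 1"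
    using fin summand card_field_ge_2[where 'a='a]
    by (simp add: coeff_sum sum.If_cases Int_absorb1 Int_absorb2 of_nat_diff of_nat_card_field)
  moreover have "degree (\<Sum>S\<in>Pow J. power_sum_term k r J S :: 'a poly) \<le> ?D"
    using fin summand by (intro degree_sum_le) auto
  ultimately show ?case
    unfolding S_pow_Suc_digit_value[OF fin] by (rule monic_degI)
qed

lemma degree_BG_digit_block:
  assumes q: "CARD('a::{field,finite}) \<ge> 3"
  shows "degree (BG (CARD('a) ^ Suc K - 2) :: 'a poly) = block_degree CARD('a) K 0"
proof -
  let ?q = "CARD('a)" and ?n = "CARD('a) ^ Suc K - 2"
  let ?J = "{..<Suc K * (?q - 1) - 1}" and ?r = "\<lambda>t. (t + 1) div (?q - 1)"
  have blk: "digit_block ?q K 0 ?J ?r" using digit_block_initial[OF q] .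
  have n: "digit_value ?q ?r ?J = ?n" using digit_value_digit_block[OF blk q] by simp
  have vanish: "(S_pow k ?n :: 'a poly) = 0" if "Suc K \<le> k" for k
  proof -
    have "card ?J < Suc K * (?q - 1)" using q by simp
    also have "\<dots> \<le> k * (?q - 1)" using that by (rule mult_le_mono1)
    finally show ?thesis
      unfolding n[symmetric] by (intro S_pow_digit_value_eq_0) simp_all
  qed
  have BG: "(BG ?n :: 'a poly) = S_pow K ?n + (\<Sum>k<K. S_pow k ?n)"
    using BG_eq_sum_lessThan[of "Suc K" ?n, OF vanish] by simp
  have top: "degree (S_pow K ?n :: 'a poly) = block_degree ?q K 0"
    using S_pow_digit_block[OF blk q] unfolding n by (simp add: monic_deg_def)
  show ?thesis
  proof (cases K)
    case 0
    then show ?thesis unfolding BG using top by simp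
  next
    case (Suc K')
    have "degree (\<Sum>k<K. S_pow k ?n :: 'a poly) \<le> K' * ?n"
    proof (intro degree_sum_le)
      fix k assume "k \<in> {..<K}"
      then have "k * ?n \<le> K' * ?n" using Suc by simp
      then show "degree (S_pow k ?n :: 'a poly) \<le> K' * ?n"
        using degree_S_pow_le order.trans by blast
    qed simp
    also have "\<dots> < block_degree ?q K 0"
      using block_degree_gt[OF q, of K] Suc by simp
    finally show ?thesis
      unfolding BG using top by (simp add: degree_add_eq_left)
  qed
qed

theorem theorem5p3:
  fixes d :: nat and x :: "'a::{field,finite}"
  assumes "CARD('a) > 2" and "d \<ge> 1"
  shows "real (degree (BG (CARD('a) ^ d - 2) :: 'a poly)) =
     (real d - 1) * real CARD('a) ^ d
     - 2 * real CARD('a) * (real CARD('a) ^ (d - 1) - 1) / (real CARD('a) - 1)"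
proof -
  have q: "CARD('a) \<ge> 3" using assms(1) by simp
  obtain K where d: "d = Suc K" using assms(2) by (cases d) auto
  show ?thesis
    unfolding d degree_BG_digit_block[OF q] block_degree_closed_form[OF q]
    by (simp add: algebra_simps)
qed

end
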